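(* Let $\Omega,\Omega^*$ be compact metric spaces, $c\in C(\Omega\times\Omega^* )$, and $\nu$ a Borel probability measure on $\Omega^*$. Define $K_0\colon C(\Omega)\to\mathbb R$ by $K_0(\phi)=\int_{\Omega^*}\phi^c\,d\nu$. Then $K_0$ is submodular, convex, and $1$-Lipschitz with respect to the supremum norm.
   Context: For $\phi\in C(\Omega)$, the $c$-transform is $\phi^c(y)=\sup_{x\in\Omega}\phi(x)-c(x,y)$ for $y\in\Omega^*$. Submodular means $K_0(\phi_1\wedge\phi_2)+K_0(\phi_1\vee\phi_2)\leq K_0(\phi_1)+K_0(\phi_2)$ for all $\phi_1,\phi_2\in C(\Omega)$, with $\wedge,\vee$ the pointwise min and max. *)

theory Defs
  imports "HOL-Analysis.Analysis" "HOL-Probability.Probability"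
begin

definition c_transform :: "('a \<Rightarrow> 'b \<Rightarrow> real) \<Rightarrow> 'a set \<Rightarrow> ('a \<Rightarrow> real) \<Rightarrow> 'b \<Rightarrow> real" where
  "c_transform c \<Omega> \<phi> y = (SUP x\<in>\<Omega>. \<phi> x - c x y)"

definition K0 :: "('a \<Rightarrow> 'b \<Rightarrow> real) \<Rightarrow> 'a set \<Rightarrow> 'b measure \<Rightarrow> ('a \<Rightarrow> real) \<Rightarrow> real" where
  "K0 c \<Omega> \<nu> \<phi> = integral\<^sup>L \<nu> (c_transform c \<Omega> \<phi>)"

definition sup_norm_on :: "'a set \<Rightarrow> ('a \<Rightarrow> real) \<Rightarrow> real" where
  "sup_norm_on \<Omega> f = (SUP x\<in>\<Omega>. \<bar>f x\<bar>)"

end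

theory Submission
  imports Defs
begin

text \<open>Everything follows from pointwise estimates for the c-transform, which are integrated
against \<open>\<nu>\<close>. Being a supremum of functions \<open>\<phi> x - c x y\<close> that depend monotonically and affinely
on \<open>\<phi>\<close>, the c-transform is monotone, convex and commutes with adding constants; this gives
convexity and the Lipschitz bound, and \<open>\<phi>\<^sup>c(min) \<le> min(\<phi>\<^sub>1\<^sup>c, \<phi>\<^sub>2\<^sup>c)\<close>, \<open>\<phi>\<^sup>c(max) \<le> max(\<phi>\<^sub>1\<^sup>c, \<phi>\<^sub>2\<^sup>c)\<close>
gives submodularity. Compactness and uniform continuity of \<open>c\<close> make \<open>\<phi>\<^sup>c\<close> continuous, hence
integrable.\<close>

lemma c_transform_upper:
  assumes "bdd_above ((\<lambda>x. \<phi> x - c x y) ` \<Omega>)" and "x \<in> \<Omega>"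
  shows "\<phi> x - c x y \<le> c_transform c \<Omega> \<phi> y"
  unfolding c_transform_def using assms by (rule cSUP_upper2) auto

lemma c_transform_least:
  assumes "\<Omega> \<noteq> {}" and "\<And>x. x \<in> \<Omega> \<Longrightarrow> \<phi> x - c x y \<le> B"
  shows "c_transform c \<Omega> \<phi> y \<le> B"
  unfolding c_transform_def using assms by (intro cSUP_least) auto

lemma c_transform_le_shift:
  assumes "\<Omega> \<noteq> {}" and "bdd_above ((\<lambda>x. \<psi> x - c x y') ` \<Omega>)"
    and "\<And>x. x \<in> \<Omega> \<Longrightarrow> \<phi> x - c x y \<le> \<psi> x - c x y' + a"
  shows "c_transform c \<Omega> \<phi> y \<le> c_transform c \<Omega> \<psi> y' + a"
proof (rule c_transform_least[OF assms(1)])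
  fix x assume "x \<in> \<Omega>"
  with assms(3) c_transform_upper[where \<phi> = \<psi> and c = c and y = y', OF assms(2)]
  show "\<phi> x - c x y \<le> c_transform c \<Omega> \<psi> y' + a" by fastforce
qed

lemma c_transform_min_plus_max_le:
  assumes "\<Omega> \<noteq> {}"
    and "bdd_above ((\<lambda>x. \<phi>\<^sub>1 x - c x y) ` \<Omega>)" and "bdd_above ((\<lambda>x. \<phi>\<^sub>2 x - c x y) ` \<Omega>)"
  shows "c_transform c \<Omega> (\<lambda>x. min (\<phi>\<^sub>1 x) (\<phi>\<^sub>2 x)) y + c_transform c \<Omega> (\<lambda>x. max (\<phi>\<^sub>1 x) (\<phi>\<^sub>2 x)) y
           \<le> c_transform c \<Omega> \<phi>\<^sub>1 y + c_transform c \<Omega> \<phi>\<^sub>2 y"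
proof -
  have min_le: "c_transform c \<Omega> (\<lambda>x. min (\<phi>\<^sub>1 x) (\<phi>\<^sub>2 x)) y
      \<le> min (c_transform c \<Omega> \<phi>\<^sub>1 y) (c_transform c \<Omega> \<phi>\<^sub>2 y)"
    using c_transform_le_shift[where \<psi> = \<phi>\<^sub>1 and y' = y and \<phi> = "\<lambda>x. min (\<phi>\<^sub>1 x) (\<phi>\<^sub>2 x)"
        and c = c and y = y and a = 0, OF assms(1,2)]
      c_transform_le_shift[where \<psi> = \<phi>\<^sub>2 and y' = y and \<phi> = "\<lambda>x. min (\<phi>\<^sub>1 x) (\<phi>\<^sub>2 x)"
        and c = c and y = y and a = 0, OF assms(1,3)]
    by simp
  have max_le: "c_transform c \<Omega> (\<lambda>x. max (\<phi>\<^sub>1 x) (\<phi>\<^sub>2 x)) y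
      \<le> max (c_transform c \<Omega> \<phi>\<^sub>1 y) (c_transform c \<Omega> \<phi>\<^sub>2 y)"
  proof (rule c_transform_least[OF assms(1)])
    fix x assume "x \<in> \<Omega>"
    with c_transform_upper[where \<phi> = \<phi>\<^sub>1 and c = c and y = y, OF assms(2)]
      c_transform_upper[where \<phi> = \<phi>\<^sub>2 and c = c and y = y, OF assms(3)]
    show "max (\<phi>\<^sub>1 x) (\<phi>\<^sub>2 x) - c x y \<le> max (c_transform c \<Omega> \<phi>\<^sub>1 y) (c_transform c \<Omega> \<phi>\<^sub>2 y)"
      by fastforce
  qed
  from min_le max_le show ?thesis by linarith
qed

lemma c_transform_convex_combination_le:
  assumes "\<Omega> \<noteq> {}" and "0 \<le> t" and "t \<le> 1"
    and "bdd_above ((\<lambda>x. \<phi>\<^sub>1 x - c x y) ` \<Omega>)" and "bdd_above ((\<lambda>x. \<phi>\<^sub>2 x - c x y) ` \<Omega>)"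
  shows "c_transform c \<Omega> (\<lambda>x. t * \<phi>\<^sub>1 x + (1 - t) * \<phi>\<^sub>2 x) y
           \<le> t * c_transform c \<Omega> \<phi>\<^sub>1 y + (1 - t) * c_transform c \<Omega> \<phi>\<^sub>2 y"
proof (rule c_transform_least[OF assms(1)])
  fix x assume x: "x \<in> \<Omega>"
  have "t * (\<phi>\<^sub>1 x - c x y) \<le> t * c_transform c \<Omega> \<phi>\<^sub>1 y"
    using c_transform_upper[where \<phi> = \<phi>\<^sub>1 and c = c and y = y, OF assms(4) x] assms(2)
    by (rule mult_left_mono)
  moreover have "(1 - t) * (\<phi>\<^sub>2 x - c x y) \<le> (1 - t) * c_transform c \<Omega> \<phi>\<^sub>2 y"
    using c_transform_upper[where \<phi> = \<phi>\<^sub>2 and c = c and y = y, OF assms(5) x] assms(3)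
    by (intro mult_left_mono) auto
  ultimately show "t * \<phi>\<^sub>1 x + (1 - t) * \<phi>\<^sub>2 x - c x y
      \<le> t * c_transform c \<Omega> \<phi>\<^sub>1 y + (1 - t) * c_transform c \<Omega> \<phi>\<^sub>2 y"
    by (simp add: algebra_simps)
qed

lemma continuous_on_fixed_snd:
  assumes "continuous_on (A \<times> B) (\<lambda>(x, y). f x y)" and "y \<in> B"
  shows "continuous_on A (\<lambda>x. f x y)"
proof -
  have "continuous_on A (\<lambda>x. (x, y))" by (intro continuous_intros)
  moreover have "(\<lambda>x. (x, y)) ` A \<subseteq> A \<times> B" using assms(2) by auto
  ultimately show ?thesis using continuous_on_compose2[OF assms(1), of A "\<lambda>x. (x, y)"] by simp
qed

lemma bdd_above_continuous_on_compact:
  fixes f :: "'a::topological_space \<Rightarrow> real"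
  assumes "compact S" and "continuous_on S f"
  shows "bdd_above (f ` S)"
  using assms by (intro bounded_imp_bdd_above compact_imp_bounded compact_continuous_image)

lemma abs_le_sup_norm_on:
  assumes "compact \<Omega>" and "continuous_on \<Omega> f" and "x \<in> \<Omega>"
  shows "\<bar>f x\<bar> \<le> sup_norm_on \<Omega> f"
proof -
  have "bdd_above ((\<lambda>x. \<bar>f x\<bar>) ` \<Omega>)"
    using assms(1,2) by (intro bdd_above_continuous_on_compact continuous_intros)
  then show ?thesis
    unfolding sup_norm_on_def using assms(3) by (rule cSUP_upper2) auto
qed

lemma bdd_above_c_transform_argument:
  fixes c :: "'a::topological_space \<Rightarrow> 'b::topological_space \<Rightarrow> real"
  assumes "compact \<Omega>" and "continuous_on \<Omega> \<phi>"
    and "continuous_on (\<Omega> \<times> \<Omega>s) (\<lambda>(x, y). c x y)" and "y \<in> \<Omega>s"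
  shows "bdd_above ((\<lambda>x. \<phi> x - c x y) ` \<Omega>)"
proof -
  have "continuous_on \<Omega> (\<lambda>x. c x y)" using assms(3,4) by (rule continuous_on_fixed_snd)
  then show ?thesis
    using assms(1,2) by (intro bdd_above_continuous_on_compact continuous_intros)
qed

lemma continuous_on_c_transform:
  fixes \<Omega> :: "'a::metric_space set" and \<Omega>s :: "'b::metric_space set"
  assumes "compact \<Omega>" and "\<Omega> \<noteq> {}" and "compact \<Omega>s" and "continuous_on \<Omega> \<phi>"
    and c: "continuous_on (\<Omega> \<times> \<Omega>s) (\<lambda>(x, y). c x y)"
  shows "continuous_on \<Omega>s (c_transform c \<Omega> \<phi>)"
  unfolding continuous_on_iff
proof (intro ballI allI impI)
  fix y e assume y: "y \<in> \<Omega>s" and e: "(0::real) < e"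
  have "uniformly_continuous_on (\<Omega> \<times> \<Omega>s) (\<lambda>(x, y). c x y)"
    using assms by (intro compact_uniformly_continuous compact_Times)
  then obtain d where "d > 0" and d: "\<And>p p'. p \<in> \<Omega> \<times> \<Omega>s \<Longrightarrow> p' \<in> \<Omega> \<times> \<Omega>s \<Longrightarrow> dist p' p < d \<Longrightarrow>
      dist ((\<lambda>(x, y). c x y) p') ((\<lambda>(x, y). c x y) p) < e / 2"
    using e unfolding uniformly_continuous_on_def by (meson half_gt_zero)
  have "\<bar>c_transform c \<Omega> \<phi> y' - c_transform c \<Omega> \<phi> y\<bar> < e" if y': "y' \<in> \<Omega>s" "dist y' y < d" for y'
  proof -
    have close: "\<bar>c x y' - c x y\<bar> \<le> e / 2" if "x \<in> \<Omega>" for x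
      using d[of "(x, y)" "(x, y')"] that y y' by (simp add: dist_Pair_Pair dist_real_def)
    note bdd = bdd_above_c_transform_argument[OF assms(1,4) c]
    have "c_transform c \<Omega> \<phi> y' \<le> c_transform c \<Omega> \<phi> y + e / 2"
      by (rule c_transform_le_shift[where \<psi> = \<phi> and c = c and y' = y, OF assms(2) bdd[OF y]])
        (smt (verit) close)
    moreover have "c_transform c \<Omega> \<phi> y \<le> c_transform c \<Omega> \<phi> y' + e / 2"
      by (rule c_transform_le_shift[where \<psi> = \<phi> and c = c and y' = y', OF assms(2) bdd[OF y'(1)]])
        (smt (verit) close)
    ultimately show ?thesis using e by linarith
  qed
  with \<open>d > 0\<close>
  show "\<exists>d>0. \<forall>y'\<in>\<Omega>s. dist y' y < d \<longrightarrow> dist (c_transform c \<Omega> \<phi> y') (c_transform c \<Omega> \<phi> y) < e"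
    by (auto simp: dist_real_def)
qed

lemma integrable_continuous_on_compact:
  fixes f :: "'a::topological_space \<Rightarrow> real"
  assumes "finite_measure M" and "sets M = sets (restrict_space borel S)"
    and "compact S" and "continuous_on S f"
  shows "integrable M f"
proof -
  interpret finite_measure M by fact
  have space: "space M = S"
    using sets_eq_imp_space_eq[OF assms(2)] by (simp add: space_restrict_space)
  obtain B where B: "\<And>y. y \<in> S \<Longrightarrow> norm (f y) \<le> B"
    using compact_imp_bounded[OF compact_continuous_image[OF assms(4,3)]]
    unfolding bounded_iff by auto
  moreover have "f \<in> borel_measurable M"
    using borel_measurable_continuous_on_restrict[OF assms(4)]
    by (simp add: measurable_cong_sets[OF assms(2) refl])
  ultimately show ?thesis
    by (intro integrable_const_bound[where B = B]) (auto simp: space)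
qed

locale compact_cost = prob_space \<nu>
  for \<nu> :: "'b::metric_space measure" +
  fixes \<Omega> :: "'a::metric_space set" and \<Omega>s :: "'b set" and c :: "'a \<Rightarrow> 'b \<Rightarrow> real"
  assumes compact_\<Omega>: "compact \<Omega>" and \<Omega>_nonempty: "\<Omega> \<noteq> {}" and compact_\<Omega>s: "compact \<Omega>s"
    and continuous_c: "continuous_on (\<Omega> \<times> \<Omega>s) (\<lambda>(x, y). c x y)"
    and sets_\<nu>: "sets \<nu> = sets (restrict_space borel \<Omega>s)"
begin

lemma space_\<nu>: "space \<nu> = \<Omega>s"
  using sets_eq_imp_space_eq[OF sets_\<nu>] by (simp add: space_restrict_space)

lemmas bdd_above_shifted = bdd_above_c_transform_argument[OF compact_\<Omega> _ continuous_c]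

lemma integrable_c_transform:
  assumes "continuous_on \<Omega> \<phi>"
  shows "integrable \<nu> (c_transform c \<Omega> \<phi>)"
  using finite_measure_axioms sets_\<nu> compact_\<Omega>s
    continuous_on_c_transform[OF compact_\<Omega> \<Omega>_nonempty compact_\<Omega>s assms continuous_c]
  by (rule integrable_continuous_on_compact)

lemma K0_le_integral:
  assumes "continuous_on \<Omega> \<phi>" and "integrable \<nu> g"
    and "\<And>y. y \<in> \<Omega>s \<Longrightarrow> c_transform c \<Omega> \<phi> y \<le> g y"
  shows "K0 c \<Omega> \<nu> \<phi> \<le> integral\<^sup>L \<nu> g"
  unfolding K0_def
  by (rule integral_mono) (use assms integrable_c_transform space_\<nu> in auto)

lemma K0_submodular:
  assumes "continuous_on \<Omega> \<phi>\<^sub>1" and "continuous_on \<Omega> \<phi>\<^sub>2"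
  shows "K0 c \<Omega> \<nu> (\<lambda>x. min (\<phi>\<^sub>1 x) (\<phi>\<^sub>2 x)) + K0 c \<Omega> \<nu> (\<lambda>x. max (\<phi>\<^sub>1 x) (\<phi>\<^sub>2 x))
           \<le> K0 c \<Omega> \<nu> \<phi>\<^sub>1 + K0 c \<Omega> \<nu> \<phi>\<^sub>2"
proof -
  let ?min = "\<lambda>x. min (\<phi>\<^sub>1 x) (\<phi>\<^sub>2 x)" and ?max = "\<lambda>x. max (\<phi>\<^sub>1 x) (\<phi>\<^sub>2 x)"
  have min: "continuous_on \<Omega> ?min" and max: "continuous_on \<Omega> ?max"
    using assms by (auto intro: continuous_intros)
  have "K0 c \<Omega> \<nu> ?min + K0 c \<Omega> \<nu> ?max
      = integral\<^sup>L \<nu> (\<lambda>y. c_transform c \<Omega> ?min y + c_transform c \<Omega> ?max y)"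
    unfolding K0_def using integrable_c_transform[OF min] integrable_c_transform[OF max] by simp
  also have "\<dots> \<le> integral\<^sup>L \<nu> (\<lambda>y. c_transform c \<Omega> \<phi>\<^sub>1 y + c_transform c \<Omega> \<phi>\<^sub>2 y)"
    using c_transform_min_plus_max_le[OF \<Omega>_nonempty bdd_above_shifted[OF assms(1)]
        bdd_above_shifted[OF assms(2)]]
    by (intro integral_mono)
      (auto simp: space_\<nu> intro!: integrable_c_transform min max assms)
  also have "\<dots> = K0 c \<Omega> \<nu> \<phi>\<^sub>1 + K0 c \<Omega> \<nu> \<phi>\<^sub>2"
    unfolding K0_def using integrable_c_transform[OF assms(1)] integrable_c_transform[OF assms(2)]
    by simp
  finally show ?thesis .
qed

lemma K0_convex:
  assumes "continuous_on \<Omega> \<phi>\<^sub>1" and "continuous_on \<Omega> \<phi>\<^sub>2" and "0 \<le> t" and "t \<le> 1"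
  shows "K0 c \<Omega> \<nu> (\<lambda>x. t * \<phi>\<^sub>1 x + (1 - t) * \<phi>\<^sub>2 x) \<le> t * K0 c \<Omega> \<nu> \<phi>\<^sub>1 + (1 - t) * K0 c \<Omega> \<nu> \<phi>\<^sub>2"
proof -
  have "continuous_on \<Omega> (\<lambda>x. t * \<phi>\<^sub>1 x + (1 - t) * \<phi>\<^sub>2 x)"
    using assms(1,2) by (intro continuous_intros)
  then have "K0 c \<Omega> \<nu> (\<lambda>x. t * \<phi>\<^sub>1 x + (1 - t) * \<phi>\<^sub>2 x)
      \<le> integral\<^sup>L \<nu> (\<lambda>y. t * c_transform c \<Omega> \<phi>\<^sub>1 y + (1 - t) * c_transform c \<Omega> \<phi>\<^sub>2 y)"
    using assms integrable_c_transform[OF assms(1)] integrable_c_transform[OF assms(2)]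
    by (intro K0_le_integral c_transform_convex_combination_le \<Omega>_nonempty bdd_above_shifted) auto
  also have "\<dots> = t * K0 c \<Omega> \<nu> \<phi>\<^sub>1 + (1 - t) * K0 c \<Omega> \<nu> \<phi>\<^sub>2"
    unfolding K0_def using integrable_c_transform[OF assms(1)] integrable_c_transform[OF assms(2)]
    by simp
  finally show ?thesis .
qed

lemma K0_le_add_sup_norm:
  assumes "continuous_on \<Omega> \<phi>\<^sub>1" and "continuous_on \<Omega> \<phi>\<^sub>2"
  shows "K0 c \<Omega> \<nu> \<phi>\<^sub>1 \<le> K0 c \<Omega> \<nu> \<phi>\<^sub>2 + sup_norm_on \<Omega> (\<lambda>x. \<phi>\<^sub>1 x - \<phi>\<^sub>2 x)"
proof -
  let ?S = "sup_norm_on \<Omega> (\<lambda>x. \<phi>\<^sub>1 x - \<phi>\<^sub>2 x)"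
  have "\<bar>\<phi>\<^sub>1 x - \<phi>\<^sub>2 x\<bar> \<le> ?S" if "x \<in> \<Omega>" for x
    using assms that by (intro abs_le_sup_norm_on compact_\<Omega> continuous_intros)
  then have "c_transform c \<Omega> \<phi>\<^sub>1 y \<le> c_transform c \<Omega> \<phi>\<^sub>2 y + ?S" if "y \<in> \<Omega>s" for y
    by (intro c_transform_le_shift[where \<psi> = \<phi>\<^sub>2 and c = c and y' = y,
          OF \<Omega>_nonempty bdd_above_shifted[OF assms(2) that]]) fastforce
  then have "K0 c \<Omega> \<nu> \<phi>\<^sub>1 \<le> integral\<^sup>L \<nu> (\<lambda>y. c_transform c \<Omega> \<phi>\<^sub>2 y + ?S)"
    using integrable_c_transform[OF assms(2)] by (intro K0_le_integral assms) auto
  also have "\<dots> = K0 c \<Omega> \<nu> \<phi>\<^sub>2 + ?S"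
    unfolding K0_def using integrable_c_transform[OF assms(2)] by (simp add: prob_space)
  finally show ?thesis .
qed

lemma K0_dist_le_sup_norm:
  assumes "continuous_on \<Omega> \<phi>\<^sub>1" and "continuous_on \<Omega> \<phi>\<^sub>2"
  shows "\<bar>K0 c \<Omega> \<nu> \<phi>\<^sub>1 - K0 c \<Omega> \<nu> \<phi>\<^sub>2\<bar> \<le> sup_norm_on \<Omega> (\<lambda>x. \<phi>\<^sub>1 x - \<phi>\<^sub>2 x)"
proof -
  have "sup_norm_on \<Omega> (\<lambda>x. \<phi>\<^sub>2 x - \<phi>\<^sub>1 x) = sup_norm_on \<Omega> (\<lambda>x. \<phi>\<^sub>1 x - \<phi>\<^sub>2 x)"
    unfolding sup_norm_on_def by (simp add: abs_minus_commute)
  then show ?thesis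
    using K0_le_add_sup_norm[OF assms] K0_le_add_sup_norm[OF assms(2,1)] by linarith
qed

end

theorem lemma3p9:
  fixes \<Omega> :: "'a::metric_space set" and \<Omega>s :: "'b::metric_space set"
    and c :: "'a \<Rightarrow> 'b \<Rightarrow> real" and \<nu> :: "'b measure"
  assumes "compact \<Omega>" and "\<Omega> \<noteq> {}" and "compact \<Omega>s"
    and "continuous_on (\<Omega> \<times> \<Omega>s) (\<lambda>(x, y). c x y)"
    and "prob_space \<nu>" and "sets \<nu> = sets (restrict_space borel \<Omega>s)"
  shows "(\<forall>\<phi>1 \<phi>2. continuous_on \<Omega> \<phi>1 \<longrightarrow> continuous_on \<Omega> \<phi>2 \<longrightarrow>
            K0 c \<Omega> \<nu> (\<lambda>x. min (\<phi>1 x) (\<phi>2 x)) + K0 c \<Omega> \<nu> (\<lambda>x. max (\<phi>1 x) (\<phi>2 x))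
              \<le> K0 c \<Omega> \<nu> \<phi>1 + K0 c \<Omega> \<nu> \<phi>2)
       \<and> (\<forall>\<phi>1 \<phi>2 t. continuous_on \<Omega> \<phi>1 \<longrightarrow> continuous_on \<Omega> \<phi>2 \<longrightarrow> 0 \<le> t \<longrightarrow> t \<le> 1 \<longrightarrow>
            K0 c \<Omega> \<nu> (\<lambda>x. t * \<phi>1 x + (1 - t) * \<phi>2 x)
              \<le> t * K0 c \<Omega> \<nu> \<phi>1 + (1 - t) * K0 c \<Omega> \<nu> \<phi>2)
       \<and> (\<forall>\<phi>1 \<phi>2. continuous_on \<Omega> \<phi>1 \<longrightarrow> continuous_on \<Omega> \<phi>2 \<longrightarrow>
            \<bar>K0 c \<Omega> \<nu> \<phi>1 - K0 c \<Omega> \<nu> \<phi>2\<bar> \<le> sup_norm_on \<Omega> (\<lambda>x. \<phi>1 x - \<phi>2 x))"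
proof -
  interpret compact_cost \<nu> \<Omega> \<Omega>s c
    by (intro compact_cost.intro[OF assms(5)] compact_cost_axioms.intro) (use assms in auto)
  show ?thesis
    using K0_submodular K0_convex K0_dist_le_sup_norm by blast
qed

end
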